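(* Let $H$ be a Krull monoid with class group $G$, let $G_0\subseteq G$ be the set of classes containing a prime divisor, and let $G_1\subseteq G_0$ be the set of classes containing exactly one prime divisor. The following are equivalent: (a) every irreducible element of $H$ is absolutely irreducible; (b) every irreducible element of $\mathcal B(G_0)$ is absolutely irreducible, and for every irreducible $U\in\mathcal B(G_0)$ and every $g\in G_0\setminus G_1$ we have $\mathsf v_g(U)\le1$.
   Context: $H$ is a cancellative commutative monoid; it is Krull if $v$-noetherian and completely integrally closed. $\mathfrak X(H)$ is the set of nonempty divisorial prime ideals (prime divisors) of $H$; the class group $G$ (written additively) is the group of divisorial fractional ideals modulo principal ones, and $[\mathfrak p]$ is the class of $\mathfrak p$. For $G_0\subseteq G$, $\mathcal F(G_0)$ is the free abelian monoid on $G_0$; its elements $S=\prod_{g\in G_0}g^{\mathsf v_g(S)}$ are sequences, with sum $\sigma(S)=\sum\mathsf v_g(S)g$; $\mathcal B(G_0)=\{S\in\mathcal F(G_0):\sigma(S)=0\}$ is the monoid of zero-sum sequences. Irreducible: non-unit not a product of two non-units. An irreducible $r$ is absolutely irreducible if for every $n$, every factorization of $r^n$ into irreducibles coincides, up to order and associates, with $r\cdots r$. *)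

theory Defs
  imports Main "HOL-Library.Multiset"
begin

text \<open>A cancellative commutative monoid is represented (up to isomorphism) as a submonoid H
  of an abelian group of type 'a (e.g. its quotient group). The monoid operation is written +.\<close>

definition submonoid :: "'a::comm_monoid_add set \<Rightarrow> bool" where
  "submonoid M \<longleftrightarrow> 0 \<in> M \<and> (\<forall>a\<in>M. \<forall>b\<in>M. a + b \<in> M)"

definition unit_of :: "'a::comm_monoid_add set \<Rightarrow> 'a \<Rightarrow> bool" where
  "unit_of M u \<longleftrightarrow> u \<in> M \<and> (\<exists>v\<in>M. u + v = 0)"

definition assoc_in :: "'a::comm_monoid_add set \<Rightarrow> 'a \<Rightarrow> 'a \<Rightarrow> bool" where
  "assoc_in M a b \<longleftrightarrow> a \<in> M \<and> b \<in> M \<and> (\<exists>u. unit_of M u \<and> b = a + u)"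

definition irred :: "'a::comm_monoid_add set \<Rightarrow> 'a \<Rightarrow> bool" where
  "irred M r \<longleftrightarrow> r \<in> M \<and> \<not> unit_of M r \<and>
     (\<forall>a\<in>M. \<forall>b\<in>M. r = a + b \<longrightarrow> unit_of M a \<or> unit_of M b)"

primrec nmul :: "nat \<Rightarrow> 'a::comm_monoid_add \<Rightarrow> 'a" where
  "nmul 0 x = 0"
| "nmul (Suc n) x = x + nmul n x"

definition abs_irred :: "'a::comm_monoid_add set \<Rightarrow> 'a \<Rightarrow> bool" where
  "abs_irred M r \<longleftrightarrow> irred M r \<and>
     (\<forall>n\<ge>1. \<forall>xs. (\<forall>x\<in>set xs. irred M x) \<and> sum_list xs = nmul n r \<longrightarrow>
        length xs = n \<and> (\<forall>x\<in>set xs. assoc_in M x r))"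

definition qgrp :: "'a::ab_group_add set \<Rightarrow> 'a set" where
  "qgrp H = {a - b | a b. a \<in> H \<and> b \<in> H}"

definition colon :: "'a::ab_group_add set \<Rightarrow> 'a set \<Rightarrow> 'a set" where
  "colon H X = {y \<in> qgrp H. \<forall>x\<in>X. y + x \<in> H}"

definition vclose :: "'a::ab_group_add set \<Rightarrow> 'a set \<Rightarrow> 'a set" where
  "vclose H X = colon H (colon H X)"

definition s_ideal :: "'a::ab_group_add set \<Rightarrow> 'a set \<Rightarrow> bool" where
  "s_ideal H A \<longleftrightarrow> A \<subseteq> H \<and> (\<forall>a\<in>A. \<forall>h\<in>H. a + h \<in> A)"

definition divisorial_ideal :: "'a::ab_group_add set \<Rightarrow> 'a set \<Rightarrow> bool" where
  "divisorial_ideal H A \<longleftrightarrow> s_ideal H A \<and> vclose H A = A"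

definition prime_ideal :: "'a::ab_group_add set \<Rightarrow> 'a set \<Rightarrow> bool" where
  "prime_ideal H P \<longleftrightarrow> s_ideal H P \<and> P \<noteq> H \<and>
     (\<forall>a\<in>H. \<forall>b\<in>H. a + b \<in> P \<longrightarrow> a \<in> P \<or> b \<in> P)"

definition prime_divisor :: "'a::ab_group_add set \<Rightarrow> 'a set \<Rightarrow> bool" where
  "prime_divisor H P \<longleftrightarrow> P \<noteq> {} \<and> divisorial_ideal H P \<and> prime_ideal H P"

definition v_noetherian :: "'a::ab_group_add set \<Rightarrow> bool" where
  "v_noetherian H \<longleftrightarrow> (\<forall>A :: nat \<Rightarrow> 'a set.
     (\<forall>n. divisorial_ideal H (A n)) \<and> (\<forall>n. A n \<subseteq> A (Suc n)) \<longrightarrow> (\<exists>m. \<forall>n\<ge>m. A n = A m))"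

definition completely_integrally_closed :: "'a::ab_group_add set \<Rightarrow> bool" where
  "completely_integrally_closed H \<longleftrightarrow>
     (\<forall>x\<in>qgrp H. (\<exists>c\<in>H. \<forall>n\<ge>1. c + nmul n x \<in> H) \<longrightarrow> x \<in> H)"

definition krull_monoid :: "'a::ab_group_add set \<Rightarrow> bool" where
  "krull_monoid H \<longleftrightarrow> submonoid H \<and> v_noetherian H \<and> completely_integrally_closed H"

text \<open>The class of a divisorial (fractional) ideal A: its coset modulo principal fractional
  ideals x + H (x in the quotient group), i.e. the set of all translates x + A.\<close>
definition cls :: "'a::ab_group_add set \<Rightarrow> 'a set \<Rightarrow> 'a set set" where
  "cls H A = {(\<lambda>y. x + y) ` A | x. x \<in> qgrp H}"

definition class_add :: "'a::ab_group_add set \<Rightarrow> 'a set set \<Rightarrow> 'a set set \<Rightarrow> 'a set set" where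
  "class_add H C D = {vclose H {a + b | a b. a \<in> A \<and> b \<in> B} | A B. A \<in> C \<and> B \<in> D}"

definition class_sum :: "'a::ab_group_add set \<Rightarrow> 'a set set multiset \<Rightarrow> 'a set set" where
  "class_sum H S = foldr (class_add H) (SOME xs. mset xs = S) (cls H H)"

definition G0 :: "'a::ab_group_add set \<Rightarrow> 'a set set set" where
  "G0 H = {cls H P | P. prime_divisor H P}"

definition G1 :: "'a::ab_group_add set \<Rightarrow> 'a set set set" where
  "G1 H = {C \<in> G0 H. \<exists>!P. prime_divisor H P \<and> P \<in> C}"

text \<open>Monoid of zero-sum sequences over G0 (sequences = finite multisets).\<close>
definition BG0 :: "'a::ab_group_add set \<Rightarrow> 'a set set multiset set" where
  "BG0 H = {S. set_mset S \<subseteq> G0 H \<and> class_sum H S = cls H H}"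

end

theory Submission
  imports Defs "HOL-Library.Set_Algebras"
begin

text \<open>
  A Krull monoid H has a divisor theory: every nonempty divisorial ideal is, uniquely, a
  v-product of prime divisors. Existence comes from H being v-noetherian; uniqueness from
  complete integral closure, which makes divisorial ideals v-invertible and v-multiplication
  cancellative. Factoring a + H gives a homomorphism from H to the free monoid on the prime
  divisors whose fibres are the associate classes; taking classes yields the surjective block
  homomorphism \<beta> : H \<rightarrow> B(G0), along which units, irreducibility and factorizations transfer.

  What \<beta> forgets is which prime divisor of a class occurs. If a class g has a single prime
  divisor nothing is lost; if g contains primes P \<noteq> R and v_g(U) \<ge> 2 for an irreducible
  U = g g W, then lifting W to X, the irreducible PRX has a square associated to PPX \<cdot> RRX,
  so it is not absolutely irreducible. Conversely, if v_g(\<beta> r) \<le> 1 at every such g, then in a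
  factorization of r^n into n factors, all with block \<beta>(r), the multiplicity of each prime
  of such a class is at most 1 in every factor, and the multiplicities must add up to n times
  that in r, so every factor has the divisor of r.
\<close>

lemma image_add_eq_elt_set_plus: "(\<lambda>y. x + y) ` A = x +o A"
  unfolding elt_set_plus_def by auto

lemma Collect_plus_eq_set_plus: "{a + b | a b. a \<in> A \<and> b \<in> B} = A + B"
  unfolding set_plus_def by auto

lemma count_image_mset_ge: "count M x \<le> count (image_mset f M) (f x)"
  by (induction M) auto

lemma count_image_mset_inj:
  "(\<forall>y\<in>#M. f y = f x \<longrightarrow> y = x) \<Longrightarrow> count (image_mset f M) (f x) = count M x"
  by (induction M) auto

lemma count_sum_list: "count (sum_list Ms) x = (\<Sum>M\<leftarrow>Ms. count M x)"
  by (induction Ms) auto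

lemma image_mset_sum_list: "image_mset f (sum_list Ms) = (\<Sum>M\<leftarrow>Ms. image_mset f M)"
  by (induction Ms) auto

lemma image_mset_nmul: "image_mset f (nmul n M) = nmul n (image_mset f M)"
  by (induction n) auto

lemma count_nmul: "count (nmul n M) x = n * count M x"
  by (induction n) auto

lemma sum_list_le_one_eq_length:
  fixes ys :: "nat list"
  assumes "\<forall>y\<in>set ys. y \<le> 1" and "sum_list ys = length ys"
  shows "\<forall>y\<in>set ys. y = 1"
  using assms
proof (induction ys)
  case (Cons y ys)
  have "sum_list ys \<le> length ys" using Cons.prems(1) by (induction ys) (auto simp: add_mono)
  then show ?case using Cons by auto
qed simp

lemma sum_list_eq_length_mult:
  fixes ys :: "nat list"
  assumes "\<forall>y\<in>set ys. y \<le> 1" and "c \<le> 1" and "sum_list ys = length ys * c" and "y \<in> set ys"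
  shows "y = c"
  using assms sum_list_le_one_eq_length[of ys] by (cases "c = 0") auto

lemma irred_mem: "irred M r \<Longrightarrow> r \<in> M"
  unfolding irred_def by auto

lemma abs_irredD:
  "abs_irred M r \<Longrightarrow> n \<ge> 1 \<Longrightarrow> \<forall>x\<in>set xs. irred M x \<Longrightarrow> sum_list xs = nmul n r \<Longrightarrow>
    length xs = n \<and> (\<forall>x\<in>set xs. assoc_in M x r)"
  unfolding abs_irred_def by blast

lemma abs_irredI:
  "irred M r \<Longrightarrow>
    (\<And>n xs. n \<ge> 1 \<Longrightarrow> \<forall>x\<in>set xs. irred M x \<Longrightarrow> sum_list xs = nmul n r \<Longrightarrow>
      length xs = n \<and> (\<forall>x\<in>set xs. assoc_in M x r)) \<Longrightarrow> abs_irred M r"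
  unfolding abs_irred_def by blast

section \<open>The v-operation\<close>

locale cancellative_monoid =
  fixes H :: "'a::ab_group_add set"
  assumes submonoid: "submonoid H"
begin

abbreviation Q :: "'a set" where "Q \<equiv> qgrp H"

lemma zero_mem: "0 \<in> H"
  using submonoid by (simp add: submonoid_def)

lemma add_mem: "a \<in> H \<Longrightarrow> b \<in> H \<Longrightarrow> a + b \<in> H"
  using submonoid by (simp add: submonoid_def)

lemma subset_qgrp: "H \<subseteq> Q"
  unfolding qgrp_def using zero_mem by force

lemma qgrp_add: "x \<in> Q \<Longrightarrow> y \<in> Q \<Longrightarrow> x + y \<in> Q"
proof -
  assume "x \<in> Q" "y \<in> Q"
  then obtain a b c d where "a \<in> H" "b \<in> H" "c \<in> H" "d \<in> H" "x = a - b" "y = c - d"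
    unfolding qgrp_def by blast
  then have "x + y = (a + c) - (b + d)" "a + c \<in> H" "b + d \<in> H"
    by (auto simp: add_mem algebra_simps)
  then show ?thesis unfolding qgrp_def by blast
qed

lemma qgrp_uminus: "x \<in> Q \<Longrightarrow> -x \<in> Q"
  unfolding qgrp_def by (auto, metis minus_diff_eq)

lemma qgrp_zero: "0 \<in> Q"
  using subset_qgrp zero_mem by auto

lemma qgrp_diff: "x \<in> Q \<Longrightarrow> y \<in> Q \<Longrightarrow> x - y \<in> Q"
  using qgrp_add[of x "-y"] qgrp_uminus by simp

lemma elt_set_plus_subset_qgrp: "x \<in> Q \<Longrightarrow> X \<subseteq> Q \<Longrightarrow> x +o X \<subseteq> Q"
  unfolding elt_set_plus_def using qgrp_add by auto

lemma set_plus_subset_qgrp: "X \<subseteq> Q \<Longrightarrow> Y \<subseteq> Q \<Longrightarrow> X + Y \<subseteq> Q"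
  using qgrp_add by (auto elim!: set_plus_elim)

lemma set_plus_subset: "X \<subseteq> H \<Longrightarrow> Y \<subseteq> H \<Longrightarrow> X + Y \<subseteq> H"
  using add_mem by (auto elim!: set_plus_elim)

lemma colon_subset_qgrp: "colon H X \<subseteq> Q"
  unfolding colon_def by auto

lemma colon_antimono: "X \<subseteq> Y \<Longrightarrow> colon H Y \<subseteq> colon H X"
  unfolding colon_def by auto

lemma subset_colon_colon: "X \<subseteq> Q \<Longrightarrow> X \<subseteq> colon H (colon H X)"
  unfolding colon_def by (auto simp: add.commute)

lemma colon_vclose: "X \<subseteq> Q \<Longrightarrow> colon H (vclose H X) = colon H X"
  unfolding vclose_def by (meson subset_colon_colon colon_subset_qgrp colon_antimono subset_antisym)

lemma vclose_subset_qgrp: "vclose H X \<subseteq> Q"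
  unfolding vclose_def by (rule colon_subset_qgrp)

lemma vclose_mono: "X \<subseteq> Y \<Longrightarrow> vclose H X \<subseteq> vclose H Y"
  unfolding vclose_def by (intro colon_antimono)

lemma vclose_increasing: "X \<subseteq> Q \<Longrightarrow> X \<subseteq> vclose H X"
  unfolding vclose_def by (rule subset_colon_colon)

lemma vclose_idem: "X \<subseteq> Q \<Longrightarrow> vclose H (vclose H X) = vclose H X"
  by (simp add: vclose_def colon_vclose[unfolded vclose_def])

lemma colon_self: "colon H H = H"
proof
  show "colon H H \<subseteq> H" unfolding colon_def using zero_mem by force
  show "H \<subseteq> colon H H" unfolding colon_def using subset_qgrp add_mem by auto
qed

lemma vclose_self: "vclose H H = H"
  by (simp add: vclose_def colon_self)

lemma vclose_subset_self: "X \<subseteq> H \<Longrightarrow> vclose H X \<subseteq> H"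
  using vclose_mono vclose_self by blast

lemma vclose_add_mem:
  assumes x: "x \<in> vclose H X" and h: "h \<in> H"
  shows "x + h \<in> vclose H X"
proof -
  have "x \<in> Q" and "\<And>y. y \<in> colon H X \<Longrightarrow> x + y \<in> H"
    using x unfolding vclose_def colon_def by auto
  then show ?thesis
    unfolding vclose_def colon_def[of H "colon H X"] using h qgrp_add subset_qgrp add_mem
    by (auto simp: add_ac) (metis add.commute add.left_commute add_mem)
qed

lemma colon_elt_set_plus: "x \<in> Q \<Longrightarrow> colon H (x +o X) = (-x) +o colon H X"
proof (rule set_eqI)
  fix y assume x: "x \<in> Q"
  have "y \<in> colon H (x +o X) \<longleftrightarrow> y \<in> Q \<and> (\<forall>z\<in>X. y + (x + z) \<in> H)"
    unfolding colon_def elt_set_plus_def by auto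
  moreover have "y \<in> (-x) +o colon H X \<longleftrightarrow> y + x \<in> Q \<and> (\<forall>z\<in>X. y + x + z \<in> H)"
    unfolding set_minus_plus[symmetric] colon_def by simp
  moreover have "y \<in> Q \<longleftrightarrow> y + x \<in> Q"
    using qgrp_add[OF _ x] qgrp_diff[OF _ x] by force
  ultimately show "y \<in> colon H (x +o X) \<longleftrightarrow> y \<in> (-x) +o colon H X"
    by (simp add: add.assoc)
qed

lemma vclose_elt_set_plus: "x \<in> Q \<Longrightarrow> vclose H (x +o X) = x +o vclose H X"
  unfolding vclose_def using colon_elt_set_plus[of x] colon_elt_set_plus[of "-x"] qgrp_uminus[of x]
  by simp

lemma colon_set_plus:
  "X \<subseteq> Q \<Longrightarrow> y \<in> colon H (X + Z) \<longleftrightarrow> y \<in> Q \<and> (\<forall>x\<in>X. y + x \<in> colon H Z)"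
proof -
  assume X: "X \<subseteq> Q"
  have "y \<in> colon H (X + Z) \<longleftrightarrow> y \<in> Q \<and> (\<forall>x\<in>X. \<forall>z\<in>Z. y + x + z \<in> H)"
    unfolding colon_def by (auto simp: add.assoc elim!: set_plus_elim)
  also have "\<dots> \<longleftrightarrow> y \<in> Q \<and> (\<forall>x\<in>X. y + x \<in> colon H Z)"
    unfolding colon_def using X qgrp_add by blast
  finally show ?thesis .
qed

lemma vclose_set_plus_vclose:
  "X \<subseteq> Q \<Longrightarrow> Y \<subseteq> Q \<Longrightarrow> vclose H (X + vclose H Y) = vclose H (X + Y)"
proof -
  assume X: "X \<subseteq> Q" and Y: "Y \<subseteq> Q"
  have "colon H (X + vclose H Y) = colon H (X + Y)"
    using colon_set_plus[OF X] colon_vclose[OF Y] by blast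
  then show ?thesis unfolding vclose_def by simp
qed

lemma vclose_self_plus: "vclose H (H + X) = vclose H X"
proof -
  have "colon H (H + X) = colon H X"
  proof (rule set_eqI)
    fix y
    show "y \<in> colon H (H + X) \<longleftrightarrow> y \<in> colon H X"
      unfolding colon_def set_plus_def
      apply (rule iffI)
       apply clarsimp
       apply (metis add_0 zero_mem)
      apply clarsimp
      apply (metis add.left_commute add_mem)
      done
  qed
  then show ?thesis unfolding vclose_def by simp
qed

text \<open>Intersecting with Q makes vmult associative on all sets, as fold_mset requires.\<close>

definition vmult :: "'a set \<Rightarrow> 'a set \<Rightarrow> 'a set" where
  "vmult X Y = vclose H ((X \<inter> Q) + (Y \<inter> Q))"

lemma vmult_subset_qgrp: "vmult X Y \<subseteq> Q"
  unfolding vmult_def by (rule vclose_subset_qgrp)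

lemma vmult_commute: "vmult X Y = vmult Y X"
  unfolding vmult_def by (simp add: add.commute)

lemma vmult_assoc: "vmult (vmult X Y) Z = vmult X (vmult Y Z)"
proof -
  have XY: "vmult X Y \<inter> Q = vmult X Y" and YZ: "vmult Y Z \<inter> Q = vmult Y Z"
    using vmult_subset_qgrp by auto
  have "vmult (vmult X Y) Z = vclose H ((Z \<inter> Q) + vclose H ((X \<inter> Q) + (Y \<inter> Q)))"
    unfolding vmult_def[of "vmult X Y"] XY by (simp add: add.commute vmult_def)
  also have "\<dots> = vclose H ((Z \<inter> Q) + ((X \<inter> Q) + (Y \<inter> Q)))"
    by (rule vclose_set_plus_vclose) (use set_plus_subset_qgrp[of "X \<inter> Q" "Y \<inter> Q"] in auto)
  also have "\<dots> = vclose H ((X \<inter> Q) + ((Y \<inter> Q) + (Z \<inter> Q)))"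
    by (simp add: add_ac)
  also have "\<dots> = vclose H ((X \<inter> Q) + vclose H ((Y \<inter> Q) + (Z \<inter> Q)))"
    by (rule vclose_set_plus_vclose[symmetric]) (use set_plus_subset_qgrp[of "Y \<inter> Q" "Z \<inter> Q"] in auto)
  also have "\<dots> = vmult X (vmult Y Z)"
    unfolding vmult_def[of X "vmult Y Z"] YZ by (simp add: vmult_def)
  finally show ?thesis .
qed

lemma vmult_left_commute: "vmult X (vmult Y Z) = vmult Y (vmult X Z)"
  by (metis vmult_assoc vmult_commute)

lemma comp_fun_commute_vmult: "comp_fun_commute vmult"
  unfolding comp_fun_commute_def by (auto simp: fun_eq_iff vmult_left_commute)

lemma vmult_self_left: "X \<subseteq> Q \<Longrightarrow> vmult H X = vclose H X"
  unfolding vmult_def using subset_qgrp by (simp add: Int_absorb2 vclose_self_plus)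

lemma vmult_elt_set_plus: "t \<in> Q \<Longrightarrow> X \<subseteq> Q \<Longrightarrow> vmult (t +o X) Y = t +o vmult X Y"
  using elt_set_plus_subset_qgrp[of t X]
  by (simp add: vmult_def Int_absorb2 set_plus_rearrange3 vclose_elt_set_plus)

definition v_ideal :: "'a set \<Rightarrow> bool" where
  "v_ideal A \<longleftrightarrow> A \<noteq> {} \<and> divisorial_ideal H A"

lemma v_ideal_iff: "v_ideal A \<longleftrightarrow> A \<subseteq> H \<and> A \<noteq> {} \<and> vclose H A = A"
proof
  assume "A \<subseteq> H \<and> A \<noteq> {} \<and> vclose H A = A"
  then have "\<forall>a\<in>A. \<forall>h\<in>H. a + h \<in> A"
    by (metis vclose_add_mem)
  then show "v_ideal A"
    using \<open>A \<subseteq> H \<and> A \<noteq> {} \<and> vclose H A = A\<close>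
    unfolding v_ideal_def divisorial_ideal_def s_ideal_def by blast
qed (auto simp: v_ideal_def divisorial_ideal_def s_ideal_def)

lemma v_ideal_subset_qgrp: "v_ideal A \<Longrightarrow> A \<subseteq> Q"
  unfolding v_ideal_iff using subset_qgrp by auto

lemma v_ideal_add_mem: "v_ideal A \<Longrightarrow> a \<in> A \<Longrightarrow> h \<in> H \<Longrightarrow> a + h \<in> A"
  unfolding v_ideal_def divisorial_ideal_def s_ideal_def by auto

lemma v_ideal_self: "v_ideal H"
  unfolding v_ideal_iff using zero_mem vclose_self by auto

lemma v_ideal_elt_set_plus: "a \<in> H \<Longrightarrow> v_ideal (a +o H)"
proof -
  assume a: "a \<in> H"
  have "a +o H \<subseteq> H" using a add_mem by (auto simp: elt_set_plus_def)
  moreover have "a \<in> a +o H" using zero_mem set_plus_intro2[of 0 H a] by simp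
  moreover have "vclose H (a +o H) = a +o H"
    using vclose_elt_set_plus[of a H] a subset_qgrp vclose_self by auto
  ultimately show ?thesis unfolding v_ideal_iff by auto
qed

lemma vmult_eq_vclose: "X \<subseteq> Q \<Longrightarrow> Y \<subseteq> Q \<Longrightarrow> vmult X Y = vclose H (X + Y)"
  by (simp add: vmult_def Int_absorb2)

lemma v_ideal_vmult: "v_ideal A \<Longrightarrow> v_ideal B \<Longrightarrow> v_ideal (vmult A B)"
proof -
  assume A: "v_ideal A" and B: "v_ideal B"
  have AB: "A + B \<subseteq> H" "A + B \<noteq> {}"
    using A B set_plus_subset[of A B] unfolding v_ideal_iff by auto
  then have "A + B \<subseteq> Q" using subset_qgrp by auto
  then have "vclose H (A + B) \<subseteq> H" "vclose H (A + B) \<noteq> {}"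
      "vclose H (vclose H (A + B)) = vclose H (A + B)"
    using AB vclose_subset_self[of "A + B"] vclose_increasing[of "A + B"] vclose_idem[of "A + B"]
    by auto
  then show ?thesis
    unfolding vmult_eq_vclose[OF v_ideal_subset_qgrp[OF A] v_ideal_subset_qgrp[OF B]] v_ideal_iff
    by blast
qed

lemma vmult_subset_left: "v_ideal A \<Longrightarrow> B \<subseteq> H \<Longrightarrow> vmult A B \<subseteq> A"
proof -
  assume A: "v_ideal A" and B: "B \<subseteq> H"
  have "(A \<inter> Q) + (B \<inter> Q) \<subseteq> A"
    using v_ideal_add_mem[OF A] B by (auto elim!: set_plus_elim)
  then show ?thesis unfolding vmult_def using A unfolding v_ideal_iff by (metis vclose_mono)
qed

lemma vmult_self_v_ideal: "v_ideal A \<Longrightarrow> vmult H A = A"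
  using vmult_self_left v_ideal_subset_qgrp unfolding v_ideal_iff by auto

end

section \<open>Divisor theory of a Krull monoid\<close>

locale krull = cancellative_monoid +
  assumes v_noetherian: "v_noetherian H"
    and completely_integrally_closed: "completely_integrally_closed H"

lemma krull_monoid_imp_krull: "krull_monoid H \<Longrightarrow> krull H"
  unfolding krull_monoid_def krull_def krull_axioms_def cancellative_monoid_def by blast

context krull
begin

lemma vclose_plus_colon:
  assumes A: "A \<subseteq> H" "A \<noteq> {}"
  shows "vclose H (A + colon H A) = H"
proof -
  let ?C = "colon H A"
  have "colon H (A + ?C) = H"
  proof
    show "H \<subseteq> colon H (A + ?C)"
      unfolding colon_def using A subset_qgrp add_mem by (auto simp: add_ac elim!: set_plus_elim)
    show "colon H (A + ?C) \<subseteq> H"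
    proof
      fix x assume x: "x \<in> colon H (A + ?C)"
      then have xQ: "x \<in> Q" and xAC: "\<And>a c. a \<in> A \<Longrightarrow> c \<in> ?C \<Longrightarrow> x + (a + c) \<in> H"
        unfolding colon_def by auto
      \<comment> \<open>x + colon H A \<subseteq> colon H A, so all multiples of x lie in colon H A\<close>
      have nmul_colon: "nmul n x \<in> ?C" for n
      proof (induction n)
        case 0 then show ?case using qgrp_zero A unfolding colon_def by auto
      next
        case (Suc n)
        have "x + nmul n x \<in> Q" using Suc colon_subset_qgrp qgrp_add xQ by auto
        moreover have "\<forall>a\<in>A. x + nmul n x + a \<in> H"
          using xAC[OF _ Suc] by (simp add: algebra_simps)
        ultimately show ?case unfolding colon_def by simp
      qed
      obtain a where "a \<in> A" using A by auto
      then have "\<forall>n\<ge>1. a + nmul n x \<in> H"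
        using nmul_colon unfolding colon_def by (auto simp: add.commute)
      then show "x \<in> H"
        using completely_integrally_closed xQ \<open>a \<in> A\<close> A
        unfolding completely_integrally_closed_def by blast
    qed
  qed
  then show ?thesis unfolding vclose_def by (simp add: colon_self)
qed

lemma vmult_colon: "v_ideal A \<Longrightarrow> vmult (colon H A) A = H"
  using vclose_plus_colon vmult_eq_vclose[OF colon_subset_qgrp v_ideal_subset_qgrp]
  unfolding v_ideal_iff by (simp add: add.commute)

lemma vmult_left_cancel:
  assumes A: "v_ideal A" and X: "X \<subseteq> Q" and Y: "Y \<subseteq> Q" and eq: "vmult A X = vmult A Y"
  shows "vclose H X = vclose H Y"
proof -
  have "vclose H Z = vmult (colon H A) (vmult A Z)" if "Z \<subseteq> Q" for Z
    using vmult_colon[OF A] vmult_self_left[OF that] by (simp add: vmult_assoc[symmetric])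
  then show ?thesis using X Y eq by simp
qed

lemma vmult_left_cancel_v_ideal:
  "v_ideal A \<Longrightarrow> v_ideal X \<Longrightarrow> v_ideal Y \<Longrightarrow> vmult A X = vmult A Y \<Longrightarrow> X = Y"
  using vmult_left_cancel v_ideal_subset_qgrp unfolding v_ideal_iff by metis

lemma vmult_eq_right_iff:
  assumes A: "v_ideal A" and B: "v_ideal B"
  shows "vmult A B = B \<longleftrightarrow> A = H"
proof
  assume "vmult A B = B"
  then have "vmult B A = vmult B H"
    using vmult_self_v_ideal[OF B] by (simp add: vmult_commute)
  then show "A = H"
    using vmult_left_cancel[OF B] v_ideal_subset_qgrp[OF A] subset_qgrp vclose_self A
    unfolding v_ideal_iff by metis
qed (use vmult_self_v_ideal B in simp)

lemma v_ideal_dvd: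
  assumes A: "v_ideal A" and B: "v_ideal B" and AB: "A \<subseteq> B"
  shows "\<exists>C. v_ideal C \<and> A = vmult B C"
proof -
  let ?C = "vmult (colon H B) A"
  have CA: "colon H B + A \<subseteq> Q"
    using set_plus_subset_qgrp colon_subset_qgrp v_ideal_subset_qgrp[OF A] by blast
  have C_eq: "?C = vclose H (colon H B + A)"
    using vmult_eq_vclose[OF colon_subset_qgrp v_ideal_subset_qgrp[OF A]] .
  have "colon H B + A \<subseteq> H"
    using AB unfolding colon_def by (auto elim!: set_plus_elim)
  then have "?C \<subseteq> H" using C_eq vclose_subset_self by simp
  moreover have "0 \<in> colon H B" using B qgrp_zero unfolding colon_def v_ideal_iff by auto
  then have "A \<subseteq> ?C" using C_eq CA set_zero_plus2 vclose_increasing by blast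
  moreover have "vclose H ?C = ?C" using C_eq CA vclose_idem by simp
  ultimately have "v_ideal ?C" using A unfolding v_ideal_iff by auto
  moreover have "vmult B ?C = A"
    by (metis vmult_assoc vmult_commute vmult_colon[OF B] vmult_self_v_ideal[OF A])
  ultimately show ?thesis by auto
qed

lemma prime_divisor_v_ideal: "prime_divisor H P \<Longrightarrow> v_ideal P"
  unfolding prime_divisor_def v_ideal_def by auto

lemma prime_divisor_neq_self: "prime_divisor H P \<Longrightarrow> P \<noteq> H"
  unfolding prime_divisor_def prime_ideal_def by auto

lemma prime_divisorD:
  "prime_divisor H P \<Longrightarrow> a \<in> H \<Longrightarrow> b \<in> H \<Longrightarrow> a + b \<in> P \<Longrightarrow> a \<in> P \<or> b \<in> P"
  unfolding prime_divisor_def prime_ideal_def by auto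

lemma maximal_v_ideal_prime_divisor:
  assumes P: "v_ideal P" "P \<noteq> H"
    and maximal: "\<And>B. v_ideal B \<Longrightarrow> P \<subseteq> B \<Longrightarrow> B \<noteq> H \<Longrightarrow> B = P"
  shows "prime_divisor H P"
proof -
  have "a \<in> P \<or> b \<in> P" if a: "a \<in> H" and b: "b \<in> H" and ab: "a + b \<in> P" for a b
  proof (rule ccontr)
    assume "\<not> (a \<in> P \<or> b \<in> P)"
    then have a_notin: "a \<notin> P" and b_notin: "b \<notin> P" by auto
    let ?X = "P \<union> a +o H"
    let ?B = "vclose H ?X"
    have XH: "?X \<subseteq> H" using P a add_mem unfolding v_ideal_iff elt_set_plus_def by auto
    then have XQ: "?X \<subseteq> Q" using subset_qgrp by auto
    have "P \<subseteq> ?B" "a \<in> ?B"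
      using vclose_increasing[OF XQ] zero_mem set_plus_intro2[of 0 H a] by auto
    moreover have "v_ideal ?B"
      using vclose_subset_self[OF XH] vclose_increasing[OF XQ] vclose_idem[OF XQ] P
      unfolding v_ideal_iff by auto
    ultimately have B_eq: "?B = H" using maximal a_notin by blast
    \<comment> \<open>b shifts ?X, hence also its v-closure H, into P\<close>
    have "b +o ?X \<subseteq> P"
      using v_ideal_add_mem[OF P(1)] ab b
      by (auto simp: elt_set_plus_def add.commute add.left_commute) (metis add.commute)
    then have "vclose H (b +o ?X) \<subseteq> P" using vclose_mono P unfolding v_ideal_iff by metis
    then have "b +o H \<subseteq> P" using vclose_elt_set_plus[of b ?X] b subset_qgrp B_eq by auto
    then show False using b_notin zero_mem set_plus_intro2[of 0 H b] by auto
  qed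
  then show ?thesis
    using P unfolding prime_divisor_def prime_ideal_def v_ideal_def divisorial_ideal_def by auto
qed

lemma prime_divisor_vmult_subset:
  assumes P: "prime_divisor H P" and B: "v_ideal B" and C: "v_ideal C" and BC: "vmult B C \<subseteq> P"
  shows "B \<subseteq> P \<or> C \<subseteq> P"
proof (rule ccontr)
  assume "\<not> ?thesis"
  then obtain b c where "b \<in> B" "b \<notin> P" "c \<in> C" "c \<notin> P" by auto
  moreover have "B + C \<subseteq> vmult B C"
    using vmult_eq_vclose v_ideal_subset_qgrp B C set_plus_subset_qgrp vclose_increasing by metis
  ultimately show False
    using prime_divisorD[OF P, of b c] BC B C unfolding v_ideal_iff by blast
qed

lemma prime_divisor_minimal:
  assumes P: "prime_divisor H P" and R: "prime_divisor H R" and RP: "R \<subseteq> P"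
  shows "R = P"
proof -
  obtain C where C: "v_ideal C" "R = vmult P C"
    using v_ideal_dvd[OF prime_divisor_v_ideal[OF R] prime_divisor_v_ideal[OF P] RP] by auto
  have "P \<subseteq> R \<or> C \<subseteq> R"
    using prime_divisor_vmult_subset[OF R prime_divisor_v_ideal[OF P] C(1)] C(2) by simp
  moreover have "R \<subseteq> C"
    using C vmult_subset_left[OF C(1), of P] prime_divisor_v_ideal[OF P]
    unfolding v_ideal_iff by (simp add: vmult_commute)
  moreover have "C \<noteq> R"
    using C vmult_eq_right_iff prime_divisor_v_ideal[OF P] prime_divisor_neq_self[OF P] by auto
  ultimately show ?thesis using RP by auto
qed

definition is_divisor :: "'a set multiset \<Rightarrow> bool" where
  "is_divisor M \<longleftrightarrow> (\<forall>P\<in>#M. prime_divisor H P)"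

definition vprod :: "'a set multiset \<Rightarrow> 'a set" where
  "vprod M = fold_mset vmult H M"

lemma vprod_empty [simp]: "vprod {#} = H"
  unfolding vprod_def by simp

lemma vprod_add_mset [simp]: "vprod (add_mset P M) = vmult P (vprod M)"
  unfolding vprod_def by (rule comp_fun_commute.fold_mset_add_mset[OF comp_fun_commute_vmult])

lemma v_ideal_vprod: "is_divisor M \<Longrightarrow> v_ideal (vprod M)"
  by (induction M)
    (auto simp: is_divisor_def v_ideal_self intro: v_ideal_vmult prime_divisor_v_ideal)

lemma vprod_union: "is_divisor M \<Longrightarrow> vprod (M + N) = vmult (vprod M) (vprod N)"
proof (induction N)
  case empty
  then show ?case using vmult_self_v_ideal[OF v_ideal_vprod] by (simp add: vmult_commute)
next
  case (add P N)
  then show ?case by (simp add: vmult_left_commute)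
qed

lemma vprod_subset: "is_divisor M \<Longrightarrow> P \<in># M \<Longrightarrow> vprod M \<subseteq> P"
proof -
  assume M: "is_divisor M" and P: "P \<in># M"
  then have "vprod M = vmult P (vprod (M - {#P#}))" by (metis insert_DiffM vprod_add_mset)
  moreover have "is_divisor (M - {#P#})" using M unfolding is_divisor_def by (meson in_diffD)
  ultimately show ?thesis
    using vmult_subset_left prime_divisor_v_ideal v_ideal_vprod M P
    unfolding is_divisor_def v_ideal_iff by metis
qed

lemma mem_if_vprod_subset:
  "prime_divisor H P \<Longrightarrow> is_divisor M \<Longrightarrow> vprod M \<subseteq> P \<Longrightarrow> P \<in># M"
proof (induction M)
  case empty
  then have "P = H" using prime_divisor_v_ideal unfolding v_ideal_iff by auto
  then show ?case using prime_divisor_neq_self empty(1) by blast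
next
  case (add R M)
  have R: "prime_divisor H R" and M: "is_divisor M" using add.prems unfolding is_divisor_def by auto
  have "R \<subseteq> P \<or> vprod M \<subseteq> P"
    using prime_divisor_vmult_subset[OF add.prems(1) prime_divisor_v_ideal[OF R] v_ideal_vprod[OF M]]
      add.prems(3) by simp
  then show ?case using prime_divisor_minimal[OF add.prems(1) R] add.IH[OF add.prems(1) M] by auto
qed

lemma vprod_inj: "is_divisor M \<Longrightarrow> is_divisor N \<Longrightarrow> vprod M = vprod N \<Longrightarrow> M = N"
proof (induction M arbitrary: N)
  case empty
  show ?case
  proof (rule ccontr)
    assume "{#} \<noteq> N"
    then obtain P where "P \<in># N" by (metis multiset_nonemptyE)
    then have "prime_divisor H P" "H \<subseteq> P"
      using empty vprod_subset[OF empty(2) \<open>P \<in># N\<close>] unfolding is_divisor_def by auto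
    then show False
      using prime_divisor_neq_self prime_divisor_v_ideal unfolding v_ideal_iff by blast
  qed
next
  case (add P M)
  have P: "prime_divisor H P" and M: "is_divisor M" using add.prems unfolding is_divisor_def by auto
  have "vprod N \<subseteq> P" using vprod_subset[OF add.prems(1)] add.prems(3) by (metis union_single_eq_member)
  then have "P \<in># N" using mem_if_vprod_subset[OF P add.prems(2)] by simp
  then have N: "N = add_mset P (N - {#P#})" by simp
  have N': "is_divisor (N - {#P#})" using add.prems(2) unfolding is_divisor_def by (meson in_diffD)
  have "vmult P (vprod M) = vmult P (vprod (N - {#P#}))" using add.prems(3) N by (metis vprod_add_mset)
  then have "vprod M = vprod (N - {#P#})"
    using vmult_left_cancel_v_ideal[OF prime_divisor_v_ideal[OF P] v_ideal_vprod[OF M] v_ideal_vprod[OF N']]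
    by simp
  then have "M = N - {#P#}" using add.IH[OF M N'] by simp
  then show ?case using \<open>P \<in># N\<close> by simp
qed

lemma wf_v_ideal_psupset: "wf {(B, A). v_ideal A \<and> v_ideal B \<and> A \<subset> B}"
  unfolding wf_iff_no_infinite_down_chain
proof
  assume "\<exists>A. \<forall>n. (A (Suc n), A n) \<in> {(B, A). v_ideal A \<and> v_ideal B \<and> A \<subset> B}"
  then obtain A :: "nat \<Rightarrow> 'a set" where A: "\<And>n. v_ideal (A n)" "\<And>n. A n \<subset> A (Suc n)"
    by blast
  have "\<forall>n. divisorial_ideal H (A n)" using A(1) unfolding v_ideal_def by blast
  moreover have "\<forall>n. A n \<subseteq> A (Suc n)" using A(2) by blast
  ultimately obtain m where "\<forall>n\<ge>m. A n = A m"
    using v_noetherian unfolding v_noetherian_def by (metis (no_types, lifting))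
  then have "A (Suc m) = A m" using le_Suc_eq by blast
  then show False using A(2)[of m] by simp
qed

lemma prime_divisor_above:
  assumes A: "v_ideal A" "A \<noteq> H"
  obtains P where "prime_divisor H P" "A \<subseteq> P"
proof -
  let ?S = "{B. v_ideal B \<and> A \<subseteq> B \<and> B \<noteq> H}"
  have "A \<in> ?S" using A by auto
  then obtain P where P: "P \<in> ?S"
    and P_min: "\<And>B. (B, P) \<in> {(B, A). v_ideal A \<and> v_ideal B \<and> A \<subset> B} \<Longrightarrow> B \<notin> ?S"
    using wfE_min[OF wf_v_ideal_psupset \<open>A \<in> ?S\<close>] by blast
  have P_max: "B = P" if "v_ideal B" "P \<subseteq> B" "B \<noteq> H" for B
    using P_min[of B] that P by auto
  have "prime_divisor H P" using maximal_v_ideal_prime_divisor[OF _ _ P_max] P by blast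
  then show ?thesis using that P by blast
qed

lemma vprod_surj: "v_ideal A \<Longrightarrow> \<exists>M. is_divisor M \<and> vprod M = A"
proof (induction A rule: wf_induct_rule[OF wf_v_ideal_psupset])
  case (1 A)
  show ?case
  proof (cases "A = H")
    case True
    then show ?thesis by (intro exI[of _ "{#}"]) (simp add: is_divisor_def)
  next
    case False
    obtain P where P: "prime_divisor H P" "A \<subseteq> P"
      using prime_divisor_above[OF 1(2) False] .
    obtain C where C: "v_ideal C" "A = vmult P C"
      using v_ideal_dvd[OF 1(2) prime_divisor_v_ideal[OF P(1)] P(2)] by auto
    have "A \<subseteq> C" using vmult_subset_left[OF C(1), of P] prime_divisor_v_ideal[OF P(1)] C(2)
      unfolding v_ideal_iff by (simp add: vmult_commute)
    moreover have "A \<noteq> C"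
      using C vmult_eq_right_iff[OF prime_divisor_v_ideal[OF P(1)] C(1)] prime_divisor_neq_self[OF P(1)]
      by auto
    ultimately have "(C, A) \<in> {(B, A). v_ideal A \<and> v_ideal B \<and> A \<subset> B}" using 1(2) C(1) by auto
    then obtain M where "is_divisor M" "vprod M = C" using 1(1) C(1) by blast
    then show ?thesis using P(1) C(2) by (intro exI[of _ "add_mset P M"]) (auto simp: is_divisor_def)
  qed
qed

definition divisor_of :: "'a \<Rightarrow> 'a set multiset" where
  "divisor_of a = (THE M. is_divisor M \<and> vprod M = a +o H)"

lemma divisor_of: "a \<in> H \<Longrightarrow> is_divisor (divisor_of a) \<and> vprod (divisor_of a) = a +o H"
proof -
  assume a: "a \<in> H"
  obtain M where M: "is_divisor M" "vprod M = a +o H"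
    using vprod_surj[OF v_ideal_elt_set_plus[OF a]] by auto
  show ?thesis unfolding divisor_of_def
    by (rule theI[of _ M]) (use M vprod_inj in auto)
qed

lemma divisor_of_eqI: "a \<in> H \<Longrightarrow> is_divisor M \<Longrightarrow> vprod M = a +o H \<Longrightarrow> divisor_of a = M"
  using divisor_of vprod_inj by metis

lemma vmult_elt_set_plus_self:
  assumes a: "a \<in> H" and b: "b \<in> H"
  shows "vmult (a +o H) (b +o H) = (a + b) +o H"
proof -
  have aQ: "a \<in> Q" and bQ: "b \<in> Q" using a b subset_qgrp by auto
  have "vmult (a +o H) (b +o H) = a +o vmult (b +o H) H"
    using vmult_elt_set_plus[OF aQ subset_qgrp, of "b +o H"] by (simp add: vmult_commute)
  also have "vmult (b +o H) H = b +o H"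
    using vmult_elt_set_plus[OF bQ subset_qgrp] vmult_self_v_ideal[OF v_ideal_self] by simp
  finally show ?thesis by (simp add: set_plus_rearrange2)
qed

lemma divisor_of_add:
  assumes a: "a \<in> H" and b: "b \<in> H"
  shows "divisor_of (a + b) = divisor_of a + divisor_of b"
proof (rule divisor_of_eqI)
  show "is_divisor (divisor_of a + divisor_of b)"
    using divisor_of[OF a] divisor_of[OF b] unfolding is_divisor_def by auto
  show "vprod (divisor_of a + divisor_of b) = (a + b) +o H"
    using vprod_union divisor_of[OF a] divisor_of[OF b] vmult_elt_set_plus_self[OF a b] by simp
qed (use a b add_mem in simp)

lemma divisor_of_zero: "divisor_of 0 = {#}"
  using divisor_of_eqI[OF zero_mem, of "{#}"] by (simp add: is_divisor_def)

lemma elt_set_plus_self_eq_iff: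
  assumes a: "a \<in> H" and b: "b \<in> H"
  shows "a +o H = b +o H \<longleftrightarrow> (\<exists>u. unit_of H u \<and> b = a + u)"
proof
  assume eq: "a +o H = b +o H"
  have "a \<in> a +o H" "b \<in> b +o H" using zero_mem set_plus_intro2[of 0 H] by fastforce+
  then have "b - a \<in> H" "a - b \<in> H" using eq by (simp_all add: set_minus_plus)
  then have "unit_of H (b - a)" unfolding unit_of_def by (intro conjI bexI[of _ "a - b"]) auto
  then show "\<exists>u. unit_of H u \<and> b = a + u" by (intro exI[of _ "b - a"]) auto
next
  assume "\<exists>u. unit_of H u \<and> b = a + u"
  then obtain u v where u: "u \<in> H" "v \<in> H" "u + v = 0" "b = a + u" unfolding unit_of_def by auto
  have "b +o H = a +o (u +o H)" using u(4) by (simp add: set_plus_rearrange2)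
  also have "u +o H = H"
  proof
    show "u +o H \<subseteq> H" using u(1) add_mem by (auto simp: elt_set_plus_def)
    show "H \<subseteq> u +o H"
    proof
      fix h assume "h \<in> H"
      then have "v + h \<in> H" "h = u + (v + h)" using u add_mem by (auto simp: add.assoc[symmetric])
      then show "h \<in> u +o H" by (metis set_plus_intro2)
    qed
  qed
  finally show "a +o H = b +o H" by simp
qed

lemma divisor_of_eq_iff:
  assumes a: "a \<in> H" and b: "b \<in> H"
  shows "divisor_of a = divisor_of b \<longleftrightarrow> (\<exists>u. unit_of H u \<and> b = a + u)"
proof -
  have "divisor_of a = divisor_of b \<longleftrightarrow> a +o H = b +o H"
    using divisor_of[OF a] divisor_of[OF b] vprod_inj by metis
  then show ?thesis using elt_set_plus_self_eq_iff[OF a b] by simp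
qed

lemma unit_of_iff_divisor_of_empty: "a \<in> H \<Longrightarrow> unit_of H a \<longleftrightarrow> divisor_of a = {#}"
  using divisor_of_eq_iff[OF zero_mem, of a] unfolding divisor_of_zero unit_of_def
  by (metis add_0)

lemma assoc_in_iff_divisor_of_eq:
  "assoc_in H x r \<longleftrightarrow> x \<in> H \<and> r \<in> H \<and> divisor_of x = divisor_of r"
  unfolding assoc_in_def using divisor_of_eq_iff by blast

lemma nmul_mem: "a \<in> H \<Longrightarrow> nmul n a \<in> H"
  by (induction n) (auto simp: zero_mem add_mem)

lemma divisor_of_nmul: "a \<in> H \<Longrightarrow> divisor_of (nmul n a) = nmul n (divisor_of a)"
  by (induction n) (auto simp: divisor_of_zero divisor_of_add nmul_mem)

lemma sum_list_mem: "set xs \<subseteq> H \<Longrightarrow> sum_list xs \<in> H"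
  by (induction xs) (auto simp: zero_mem add_mem)

lemma divisor_of_sum_list: "set xs \<subseteq> H \<Longrightarrow> divisor_of (sum_list xs) = sum_list (map divisor_of xs)"
  by (induction xs) (auto simp: divisor_of_zero divisor_of_add sum_list_mem)

section \<open>The block homomorphism\<close>

lemma cls_eq: "cls H X = {x +o X | x. x \<in> Q}"
  unfolding cls_def image_add_eq_elt_set_plus ..

lemma cls_elt_set_plus: "t \<in> Q \<Longrightarrow> cls H (t +o X) = cls H X"
proof -
  assume t: "t \<in> Q"
  have "x +o (t +o X) \<in> cls H X" if "x \<in> Q" for x
    using qgrp_add[OF that t] unfolding cls_eq by (auto simp: set_plus_rearrange2)
  moreover have "x +o X \<in> cls H (t +o X)" if "x \<in> Q" for x
  proof -
    have "x +o X = (x - t) +o (t +o X)" by (simp add: set_plus_rearrange2)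
    then show ?thesis using qgrp_diff[OF that t] unfolding cls_eq by blast
  qed
  ultimately show ?thesis unfolding cls_eq[of "t +o X"] cls_eq[of X] by blast
qed

lemma mem_cls_self: "X \<in> cls H X"
  unfolding cls_eq using qgrp_zero set_zero_plus by (metis (mono_tags, lifting) mem_Collect_eq)

lemma cls_eq_iff: "cls H X = cls H Y \<longleftrightarrow> (\<exists>t\<in>Q. X = t +o Y)"
proof
  assume "cls H X = cls H Y"
  then show "\<exists>t\<in>Q. X = t +o Y" using mem_cls_self[of X] unfolding cls_eq by auto
qed (use cls_elt_set_plus in auto)

lemma class_add_cls:
  assumes A: "A \<subseteq> Q" and B: "B \<subseteq> Q"
  shows "class_add H (cls H A) (cls H B) = cls H (vclose H (A + B))"
proof -
  have shift: "vclose H ((x +o A) + (y +o B)) = (x + y) +o vclose H (A + B)"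
    if "x \<in> Q" "y \<in> Q" for x y
    using vclose_elt_set_plus qgrp_add[OF that] by (simp add: set_plus_rearrange)
  show ?thesis
  proof (intro set_eqI iffI)
    fix Z assume "Z \<in> class_add H (cls H A) (cls H B)"
    then obtain x y where "x \<in> Q" "y \<in> Q" "Z = vclose H ((x +o A) + (y +o B))"
      unfolding class_add_def Collect_plus_eq_set_plus cls_eq by auto
    then show "Z \<in> cls H (vclose H (A + B))" unfolding cls_eq using shift qgrp_add by blast
  next
    fix Z assume "Z \<in> cls H (vclose H (A + B))"
    then obtain x where x: "x \<in> Q" "Z = x +o vclose H (A + B)" unfolding cls_eq by auto
    then have "Z = vclose H ((x +o A) + B)" using shift[OF x(1) qgrp_zero] by simp
    moreover have "x +o A \<in> cls H A" "B \<in> cls H B" using x mem_cls_self unfolding cls_eq by auto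
    ultimately show "Z \<in> class_add H (cls H A) (cls H B)"
      unfolding class_add_def Collect_plus_eq_set_plus by blast
  qed
qed

lemma cls_mem_G0: "prime_divisor H P \<Longrightarrow> cls H P \<in> G0 H"
  unfolding G0_def by auto

lemma foldr_class_add:
  "is_divisor M \<Longrightarrow> image_mset (cls H) M = mset xs \<Longrightarrow>
    foldr (class_add H) xs (cls H H) = cls H (vprod M)"
proof (induction xs arbitrary: M)
  case Nil
  then show ?case by simp
next
  case (Cons g xs)
  then obtain P where P: "P \<in># M" "cls H P = g"
    by (metis image_iff list.set_intros(1) set_image_mset set_mset_mset)
  let ?M = "M - {#P#}"
  have M: "M = add_mset P ?M" using P(1) by simp
  have P_prime: "prime_divisor H P" and M': "is_divisor ?M"
    using Cons.prems(1) P(1) unfolding is_divisor_def by (auto dest: in_diffD)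
  have "image_mset (cls H) ?M = mset xs"
    using Cons.prems(2) P by (simp add: image_mset_Diff)
  then have "foldr (class_add H) xs (cls H H) = cls H (vprod ?M)" using Cons.IH M' by blast
  then have "foldr (class_add H) (g # xs) (cls H H) = cls H (vclose H (P + vprod ?M))"
    using class_add_cls[OF v_ideal_subset_qgrp[OF prime_divisor_v_ideal[OF P_prime]]
        v_ideal_subset_qgrp[OF v_ideal_vprod[OF M']]] P(2)
    by simp
  also have "vclose H (P + vprod ?M) = vprod M"
    using vmult_eq_vclose v_ideal_subset_qgrp prime_divisor_v_ideal[OF P_prime] v_ideal_vprod[OF M']
      vprod_add_mset M by metis
  finally show ?case .
qed

text \<open>class_sum folds over an arbitrary enumeration of the multiset; foldr_class_add
  holds for every enumeration.\<close>

lemma class_sum_image_cls: "is_divisor M \<Longrightarrow> class_sum H (image_mset (cls H) M) = cls H (vprod M)"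
  unfolding class_sum_def using foldr_class_add someI_ex[OF ex_mset] by metis

lemma image_cls_mem_BG0_iff:
  "is_divisor M \<Longrightarrow> image_mset (cls H) M \<in> BG0 H \<longleftrightarrow> cls H (vprod M) = cls H H"
  unfolding BG0_def using class_sum_image_cls cls_mem_G0 unfolding is_divisor_def by auto

lemma empty_mem_BG0: "{#} \<in> BG0 H"
  using image_cls_mem_BG0_iff[of "{#}"] by (simp add: is_divisor_def)

lemma unit_of_BG0_iff: "unit_of (BG0 H) S \<longleftrightarrow> S = {#}"
  unfolding unit_of_def using empty_mem_BG0 by auto

definition block :: "'a \<Rightarrow> 'a set set multiset" where
  "block a = image_mset (cls H) (divisor_of a)"

lemma block_mem_BG0: "a \<in> H \<Longrightarrow> block a \<in> BG0 H"
  unfolding block_def using divisor_of image_cls_mem_BG0_iff cls_elt_set_plus subset_qgrp by auto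

lemma divisor_of_surj:
  assumes M: "is_divisor M" and S: "image_mset (cls H) M \<in> BG0 H"
  obtains a where "a \<in> H" "divisor_of a = M"
proof -
  obtain t where t: "t \<in> Q" "vprod M = t +o H"
    using S image_cls_mem_BG0_iff[OF M] cls_eq_iff by auto
  have "t \<in> vprod M" using t(2) zero_mem set_plus_intro2[of 0 H t] by simp
  then have "t \<in> H" using v_ideal_vprod[OF M] unfolding v_ideal_iff by auto
  then show ?thesis using that divisor_of_eqI M t by blast
qed

definition prime_of_class :: "'a set set \<Rightarrow> 'a set" where
  "prime_of_class g = (SOME P. prime_divisor H P \<and> cls H P = g)"

lemma prime_of_class: "g \<in> G0 H \<Longrightarrow> prime_divisor H (prime_of_class g) \<and> cls H (prime_of_class g) = g"
  unfolding prime_of_class_def G0_def by (rule someI_ex) auto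

lemma divisor_prime_of_class:
  assumes "set_mset S \<subseteq> G0 H"
  shows "is_divisor (image_mset prime_of_class S)"
    and "image_mset (cls H) (image_mset prime_of_class S) = S"
proof -
  show "is_divisor (image_mset prime_of_class S)"
    using assms prime_of_class unfolding is_divisor_def by auto
  have "image_mset (cls H \<circ> prime_of_class) S = image_mset id S"
    by (rule image_mset_cong) (use assms prime_of_class in auto)
  then show "image_mset (cls H) (image_mset prime_of_class S) = S"
    by (simp add: image_mset.compositionality)
qed

lemma block_add: "a \<in> H \<Longrightarrow> b \<in> H \<Longrightarrow> block (a + b) = block a + block b"
  unfolding block_def by (simp add: divisor_of_add)

lemma block_eq_empty_iff: "a \<in> H \<Longrightarrow> block a = {#} \<longleftrightarrow> unit_of H a"
  unfolding block_def using unit_of_iff_divisor_of_empty by simp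

lemma block_surj:
  assumes M: "is_divisor M" and S: "S \<in> BG0 H" and MS: "image_mset (cls H) M = S"
  obtains a where "a \<in> H" "divisor_of a = M" "block a = S"
  using divisor_of_surj[OF M] S MS unfolding block_def by metis

lemma irred_iff_irred_block:
  assumes r: "r \<in> H"
  shows "irred H r \<longleftrightarrow> irred (BG0 H) (block r)"
proof
  assume irr: "irred H r"
  have "V = {#} \<or> W = {#}" if V: "V \<in> BG0 H" and W: "W \<in> BG0 H" and VW: "block r = V + W" for V W
  proof -
    obtain M N where MN: "divisor_of r = M + N" "V = image_mset (cls H) M" "W = image_mset (cls H) N"
      using image_mset_eq_plusD[of "cls H" "divisor_of r" V W] VW unfolding block_def by auto
    have "is_divisor M" "is_divisor N"
      using divisor_of[OF r] MN(1) unfolding is_divisor_def by auto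
    then obtain b c where bc: "b \<in> H" "c \<in> H" "divisor_of b = M" "divisor_of c = N"
      using block_surj V W MN(2,3) by metis
    then obtain u where u: "unit_of H u" "r = b + c + u"
      using divisor_of_eq_iff[OF add_mem r] MN(1) by (auto simp: divisor_of_add)
    have cu: "c + u \<in> H" "divisor_of (c + u) = N"
      using u bc add_mem unit_of_iff_divisor_of_empty divisor_of_add unfolding unit_of_def by auto
    have "r = b + (c + u)" using u by (simp add: add.assoc)
    then have "unit_of H b \<or> unit_of H (c + u)" using irr bc cu unfolding irred_def by auto
    then show ?thesis using MN bc cu unit_of_iff_divisor_of_empty by auto
  qed
  moreover have "block r \<noteq> {#}" using irr r block_eq_empty_iff unfolding irred_def by auto
  ultimately show "irred (BG0 H) (block r)"
    unfolding irred_def unit_of_BG0_iff using block_mem_BG0[OF r] by auto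
next
  assume irr: "irred (BG0 H) (block r)"
  have "unit_of H a \<or> unit_of H b" if "a \<in> H" "b \<in> H" "r = a + b" for a b
    using irr that block_add block_mem_BG0 block_eq_empty_iff unit_of_BG0_iff
    unfolding irred_def by metis
  moreover have "\<not> unit_of H r" using irr block_eq_empty_iff[OF r] unit_of_BG0_iff
    unfolding irred_def by auto
  ultimately show "irred H r" unfolding irred_def using r by auto
qed

lemma assoc_in_BG0_iff: "assoc_in (BG0 H) V U \<longleftrightarrow> V \<in> BG0 H \<and> U \<in> BG0 H \<and> V = U"
  unfolding assoc_in_def unit_of_BG0_iff by auto

lemma factorization_of_associate:
  assumes xs: "set xs \<subseteq> H" "xs \<noteq> []" and y: "y \<in> H"
    and eq: "divisor_of (sum_list xs) = divisor_of y"
  obtains ys where "set ys \<subseteq> H" "sum_list ys = y" "map divisor_of ys = map divisor_of xs"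
proof -
  obtain u where u: "u \<in> H" "divisor_of u = {#}" "y = sum_list xs + u"
    using divisor_of_eq_iff[OF sum_list_mem[OF xs(1)] y] eq unit_of_iff_divisor_of_empty
    unfolding unit_of_def by auto
  obtain x xs' where x: "xs = x # xs'" using xs(2) by (cases xs) auto
  let ?ys = "(x + u) # xs'"
  have "set ?ys \<subseteq> H" using xs(1) x u add_mem by auto
  moreover have "sum_list ?ys = y" using u x by (simp add: algebra_simps)
  moreover have "map divisor_of ?ys = map divisor_of xs"
    using x xs(1) u divisor_of_add by auto
  ultimately show ?thesis using that by blast
qed

lemma block_nmul: "r \<in> H \<Longrightarrow> block (nmul n r) = nmul n (block r)"
  unfolding block_def by (simp add: divisor_of_nmul image_mset_nmul)

lemma block_sum_list: "set xs \<subseteq> H \<Longrightarrow> block (sum_list xs) = (\<Sum>x\<leftarrow>xs. block x)"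
  unfolding block_def by (induction xs) (auto simp: divisor_of_zero divisor_of_add sum_list_mem)

section \<open>Transfer of absolute irreducibility\<close>

lemma count_block_G1:
  assumes y: "y \<in> H" and P: "prime_divisor H P" and G1: "cls H P \<in> G1 H"
  shows "count (block y) (cls H P) = count (divisor_of y) P"
  unfolding block_def
proof (rule count_image_mset_inj, intro ballI impI)
  fix R assume R: "R \<in># divisor_of y" "cls H R = cls H P"
  then have "prime_divisor H R" "R \<in> cls H P"
    using divisor_of[OF y] mem_cls_self[of R] unfolding is_divisor_def by auto
  then show "R = P" using G1 P mem_cls_self[of P] unfolding G1_def by auto
qed

lemma count_divisor_of_eq_if_factorization:
  assumes xs: "set xs \<subseteq> H" and r: "r \<in> H"
    and sum: "sum_list xs = nmul (length xs) r" and same_block: "\<forall>x\<in>set xs. block x = block r"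
    and le_one: "\<And>g. g \<in> G0 H - G1 H \<Longrightarrow> count (block r) g \<le> 1"
    and x: "x \<in> set xs"
  shows "count (divisor_of x) P = count (divisor_of r) P"
proof (cases "prime_divisor H P")
  case False
  then show ?thesis
    using divisor_of x xs r unfolding is_divisor_def by (metis count_eq_zero_iff subsetD)
next
  case P: True
  show ?thesis
  proof (cases "cls H P \<in> G1 H")
    case True
    then show ?thesis using count_block_G1[OF _ P] same_block x xs r by (metis subsetD)
  next
    case False
    then have count_le: "count (divisor_of y) P \<le> 1" if "y \<in> set xs \<union> {r}" for y
      using that le_one[of "cls H P"] cls_mem_G0[OF P] same_block
        count_image_mset_ge[of "divisor_of y" P "cls H"]
      unfolding block_def by fastforce
    \<comment> \<open>the multiplicities of P in the factors are at most 1 and add up to length xs times that in r\<close>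
    have "(\<Sum>y\<leftarrow>xs. count (divisor_of y) P) = count (divisor_of (sum_list xs)) P"
      using divisor_of_sum_list[OF xs] by (simp add: count_sum_list comp_def)
    also have "\<dots> = length xs * count (divisor_of r) P"
      using sum divisor_of_nmul[OF r] by (simp add: count_nmul)
    finally show ?thesis
      using sum_list_eq_length_mult[of "map (\<lambda>y. count (divisor_of y) P) xs"] count_le x
      by auto
  qed
qed

lemma abs_irred_if_abs_irred_block:
  assumes irr: "irred H r" and abs: "abs_irred (BG0 H) (block r)"
    and le_one: "\<And>g. g \<in> G0 H - G1 H \<Longrightarrow> count (block r) g \<le> 1"
  shows "abs_irred H r"
proof (rule abs_irredI[OF irr])
  fix n xs assume n: "n \<ge> 1" and irr_xs: "\<forall>x\<in>set xs. irred H x" and sum: "sum_list xs = nmul n r"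
  have r: "r \<in> H" using irred_mem[OF irr] .
  have xs: "set xs \<subseteq> H" using irr_xs irred_mem by auto
  have "\<forall>V\<in>set (map block xs). irred (BG0 H) V"
    using irr_xs xs irred_iff_irred_block by auto
  moreover have "sum_list (map block xs) = nmul n (block r)"
    using block_sum_list[OF xs] sum block_nmul[OF r] by simp
  ultimately have "length (map block xs) = n \<and> (\<forall>V\<in>set (map block xs). V = block r)"
    using abs_irredD[OF abs n] unfolding assoc_in_BG0_iff by blast
  then have len: "length xs = n" and same_block: "\<forall>x\<in>set xs. block x = block r" by auto
  have "divisor_of x = divisor_of r" if "x \<in> set xs" for x
    using count_divisor_of_eq_if_factorization[OF xs r _ same_block le_one that] sum len
    by (simp add: multiset_eq_iff)
  then show "length xs = n \<and> (\<forall>x\<in>set xs. assoc_in H x r)"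
    using len xs r assoc_in_iff_divisor_of_eq by auto
qed

lemma exists_list_divisor_of:
  assumes "\<forall>M\<in>set Ms. is_divisor M \<and> image_mset (cls H) M \<in> BG0 H"
  obtains xs where "set xs \<subseteq> H" "map divisor_of xs = Ms"
  using assms
proof (induction Ms arbitrary: thesis)
  case Nil
  then show ?case by simp
next
  case (Cons M Ms)
  obtain xs where "set xs \<subseteq> H" "map divisor_of xs = Ms" using Cons by auto
  moreover obtain x where "x \<in> H" "divisor_of x = M" using divisor_of_surj Cons.prems(2) by auto
  ultimately show ?case using Cons.prems(1)[of "x # xs"] by auto
qed

lemma block_factorization_lifts:
  assumes Vs: "\<forall>V\<in>set Vs. V \<in> BG0 H" "Vs \<noteq> []" and y: "y \<in> H"
    and y_divisor: "divisor_of y = image_mset prime_of_class (sum_list Vs)"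
  obtains ys where "set ys \<subseteq> H" "sum_list ys = y" "map block ys = Vs"
proof -
  let ?lift = "image_mset prime_of_class"
  have lift: "is_divisor (?lift V)" "image_mset (cls H) (?lift V) = V" if "V \<in> set Vs" for V
    using divisor_prime_of_class that Vs(1) unfolding BG0_def by auto
  then obtain xs where xs: "set xs \<subseteq> H" "map divisor_of xs = map ?lift Vs"
    using exists_list_divisor_of[of "map ?lift Vs"] Vs(1) by auto
  have "xs \<noteq> []" using Vs(2) xs(2) by auto
  moreover have "divisor_of (sum_list xs) = divisor_of y"
    using divisor_of_sum_list[OF xs(1)] xs(2) y_divisor by (simp add: image_mset_sum_list comp_def)
  ultimately obtain ys where ys: "set ys \<subseteq> H" "sum_list ys = y"
    "map divisor_of ys = map divisor_of xs"
    by (rule factorization_of_associate[OF xs(1) _ y])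
  have "map block ys = map (image_mset (cls H)) (map divisor_of ys)"
    by (simp add: block_def)
  also have "\<dots> = map (image_mset (cls H)) (map ?lift Vs)" using ys(3) xs(2) by simp
  also have "\<dots> = Vs" using lift(2) by (simp add: map_idI)
  finally show ?thesis using that ys(1,2) by blast
qed

lemma abs_irred_block_if_abs_irred:
  assumes all: "\<And>r. irred H r \<Longrightarrow> abs_irred H r" and irr: "irred (BG0 H) U"
  shows "abs_irred (BG0 H) U"
proof (rule abs_irredI[OF irr])
  fix n Vs assume n: "n \<ge> 1" and irr_Vs: "\<forall>V\<in>set Vs. irred (BG0 H) V"
    and sum: "sum_list Vs = nmul n U"
  have U: "U \<in> BG0 H" using irred_mem[OF irr] .
  obtain r where r: "r \<in> H" "divisor_of r = image_mset prime_of_class U" "block r = U"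
  proof (rule block_surj[OF _ U])
    show "is_divisor (image_mset prime_of_class U)" "image_mset (cls H) (image_mset prime_of_class U) = U"
      using divisor_prime_of_class U unfolding BG0_def by auto
  qed
  have Vs: "\<forall>V\<in>set Vs. V \<in> BG0 H" using irr_Vs irred_mem by auto
  moreover have "Vs \<noteq> []"
    using sum n irr unit_of_BG0_iff unfolding irred_def by (cases n) auto
  moreover have "divisor_of (nmul n r) = image_mset prime_of_class (sum_list Vs)"
    using divisor_of_nmul[OF r(1)] r(2) sum by (simp add: image_mset_nmul)
  ultimately obtain ys where ys: "set ys \<subseteq> H" "sum_list ys = nmul n r" "map block ys = Vs"
    by (rule block_factorization_lifts[OF _ _ nmul_mem[OF r(1)]])
  have "\<forall>y\<in>set ys. irred H y"
    using irr_Vs ys irred_iff_irred_block by auto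
  then have "length ys = n \<and> (\<forall>y\<in>set ys. assoc_in H y r)"
    using abs_irredD[OF all n] ys(2) irred_iff_irred_block[OF r(1)] r(3) irr by simp
  moreover have "block y = U" if "assoc_in H y r" for y
    using that r(3) unfolding assoc_in_iff_divisor_of_eq block_def by simp
  ultimately show "length Vs = n \<and> (\<forall>V\<in>set Vs. assoc_in (BG0 H) V U)"
    using ys(3) Vs U unfolding assoc_in_BG0_iff by auto
qed

lemma two_prime_divisors_if_not_G1:
  assumes "g \<in> G0 H - G1 H"
  obtains P R where "prime_divisor H P" "prime_divisor H R" "P \<noteq> R" "cls H P = g" "cls H R = g"
proof -
  obtain P where P: "prime_divisor H P" "g = cls H P" using assms unfolding G0_def by auto
  then have "P \<in> g" using mem_cls_self by auto
  moreover have "\<not> (\<exists>!X. prime_divisor H X \<and> X \<in> g)" using assms unfolding G1_def by auto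
  ultimately obtain R where R: "prime_divisor H R" "R \<in> g" "R \<noteq> P" using P by blast
  then obtain t where "t \<in> Q" "R = t +o P" using P unfolding cls_eq by auto
  then have "cls H R = g" using P cls_elt_set_plus by simp
  then show ?thesis using that P R by metis
qed

lemma count_le_one_if_abs_irred:
  assumes all: "\<And>r. irred H r \<Longrightarrow> abs_irred H r" and irr: "irred (BG0 H) U"
    and g: "g \<in> G0 H - G1 H"
  shows "count U g \<le> 1"
proof (rule ccontr)
  assume "\<not> count U g \<le> 1"
  then have "g \<in># U" "g \<in># U - {#g#}" by (auto simp: in_diff_count simp flip: count_greater_zero_iff)
  then obtain W where UW: "U = add_mset g (add_mset g W)" by (metis insert_DiffM)
  have U: "U \<in> BG0 H" using irred_mem[OF irr] .
  then have "set_mset W \<subseteq> G0 H" using UW unfolding BG0_def by auto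
  then obtain X where X: "is_divisor X" "image_mset (cls H) X = W"
    using divisor_prime_of_class by metis
  obtain P R where PR: "prime_divisor H P" "prime_divisor H R" "P \<noteq> R" "cls H P = g" "cls H R = g"
    using two_prime_divisors_if_not_G1[OF g] by metis
  \<comment> \<open>P R X and its variants P P X and R R X all map to U, and (P R X)^2 = P P X \<cdot> R R X\<close>
  define M M1 M2 where "M = add_mset P (add_mset R X)" and "M1 = add_mset P (add_mset P X)"
    and "M2 = add_mset R (add_mset R X)"
  have divs: "is_divisor M" "is_divisor M1" "is_divisor M2"
    using X PR unfolding M_def M1_def M2_def is_divisor_def by auto
  have imgs: "image_mset (cls H) M = U" "image_mset (cls H) M1 = U" "image_mset (cls H) M2 = U"
    using X PR UW unfolding M_def M1_def M2_def by auto
  obtain r where r: "r \<in> H" "divisor_of r = M" "block r = U"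
    by (rule block_surj[OF divs(1) U imgs(1)])
  obtain r1 where r1: "r1 \<in> H" "divisor_of r1 = M1" "block r1 = U"
    by (rule block_surj[OF divs(2) U imgs(2)])
  obtain r2 where r2: "r2 \<in> H" "divisor_of r2 = M2" "block r2 = U"
    by (rule block_surj[OF divs(3) U imgs(3)])
  have eq: "divisor_of (sum_list [r1, r2]) = divisor_of (nmul 2 r)"
    using r r1 r2 by (simp add: divisor_of_add divisor_of_nmul numeral_2_eq_2 M_def M1_def M2_def)
  obtain ys where ys: "set ys \<subseteq> H" "sum_list ys = nmul 2 r" "map divisor_of ys = map divisor_of [r1, r2]"
    by (rule factorization_of_associate[OF _ _ nmul_mem[OF r(1)] eq]) (use r1 r2 in auto)
  then obtain y1 y2 where y: "ys = [y1, y2]" "divisor_of y1 = M1" "divisor_of y2 = M2"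
    using r1 r2 by (auto simp: map_eq_Cons_conv)
  then have "irred H y1" "irred H y2"
    using ys(1) irr imgs irred_iff_irred_block unfolding block_def by auto
  then have "assoc_in H y1 r"
    using abs_irredD[OF all[OF irred_iff_irred_block[OF r(1), THEN iffD2]], of 2 ys] r(3) irr ys(2) y(1)
    by simp
  then have "M1 = M" using y(2) r(2) assoc_in_iff_divisor_of_eq by simp
  moreover have "count M1 P \<noteq> count M P" using PR(3) by (simp add: M_def M1_def)
  ultimately show False by simp
qed

end

theorem mainTheorem12:
  fixes H :: "'a::ab_group_add set"
  assumes "krull_monoid H"
  shows "(\<forall>r. irred H r \<longrightarrow> abs_irred H r) \<longleftrightarrow>
         ((\<forall>U. irred (BG0 H) U \<longrightarrow> abs_irred (BG0 H) U) \<and>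
          (\<forall>U g. irred (BG0 H) U \<longrightarrow> g \<in> G0 H - G1 H \<longrightarrow> count U g \<le> 1))"
proof -
  interpret krull H using assms by (rule krull_monoid_imp_krull)
  show ?thesis
  proof (intro iffI allI impI)
    assume "\<forall>r. irred H r \<longrightarrow> abs_irred H r"
    then show "(\<forall>U. irred (BG0 H) U \<longrightarrow> abs_irred (BG0 H) U) \<and>
        (\<forall>U g. irred (BG0 H) U \<longrightarrow> g \<in> G0 H - G1 H \<longrightarrow> count U g \<le> 1)"
      using abs_irred_block_if_abs_irred count_le_one_if_abs_irred by blast
  next
    fix r
    assume b: "(\<forall>U. irred (BG0 H) U \<longrightarrow> abs_irred (BG0 H) U) \<and>
        (\<forall>U g. irred (BG0 H) U \<longrightarrow> g \<in> G0 H - G1 H \<longrightarrow> count U g \<le> 1)"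
      and irr: "irred H r"
    then have "irred (BG0 H) (block r)" using irred_iff_irred_block irred_mem by blast
    then show "abs_irred H r" using abs_irred_if_abs_irred_block[OF irr] b by blast
  qed
qed

end
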